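(* Let $C=4+\frac{2}{\log2}$ and $x_n^*=\left\lfloor\sqrt{\frac{Cn}{\log n}}\right\rfloor$. There is a constant $C'>0$ such that for all sufficiently large $n$, $$\sum_{x<y\le x_n^*}\Big[\mu(N_n(x)\ge1,\,N_n(y)\ge1)-\widetilde P_n(x,y)\Big]\le C' n^{0.8},$$ where $\widetilde P_n(x,y)=1-(1-\pi_x)^n-(1-\pi_y)^n+(1-\pi_x-\pi_y)^n$.
   Context: $\mu$ is the Gauss measure on $(0,1)$, $d\mu(\omega)=\frac{d\omega}{(\log 2)(1+\omega)}$. For irrational $\omega\in(0,1)$, $a_i(\omega)$ denote its continued fraction partial quotients, and $N_n(x)=\#\{1\le i\le n: a_i(\omega)=x\}$. For $x\in\mathbb{N}$, $\pi_x=\mu(a_1=x)=-\log_2\!\big(1-\frac{1}{(x+1)^2}\big)$. *)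

theory Defs
  imports "HOL-Probability.Probability"
begin

definition gauss_measure :: "real measure" where
  "gauss_measure = density lborel
     (\<lambda>w. ennreal (indicator {0<..<1} w / (ln 2 * (1 + w))))"

definition gauss_map :: "real \<Rightarrow> real" where
  "gauss_map w = 1 / w - of_int \<lfloor>1 / w\<rfloor>"

definition cf_digit :: "nat \<Rightarrow> real \<Rightarrow> nat" where
  "cf_digit i w = nat \<lfloor>1 / ((gauss_map ^^ (i - 1)) w)\<rfloor>"

definition cf_count :: "nat \<Rightarrow> nat \<Rightarrow> real \<Rightarrow> nat" where
  "cf_count n x w = card {i \<in> {1..n}. cf_digit i w = x}"

definition gauss_pi :: "nat \<Rightarrow> real" where
  "gauss_pi x = - log 2 (1 - 1 / (real x + 1)^2)"

definition P_tilde :: "nat \<Rightarrow> nat \<Rightarrow> nat \<Rightarrow> real" where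
  "P_tilde n x y = 1 - (1 - gauss_pi x)^n - (1 - gauss_pi y)^n
                     + (1 - gauss_pi x - gauss_pi y)^n"

definition C_const :: real where
  "C_const = 4 + 2 / ln 2"

definition x_star :: "nat \<Rightarrow> nat" where
  "x_star n = nat \<lfloor>sqrt (C_const * real n / ln (real n))\<rfloor>"

end

theory Submission
  imports Defs "HOL-Real_Asymp.Real_Asymp"
begin

text \<open>
  The measure of an event is at most 1, and
  \<open>P_tilde n x y \<ge> 1 - (1 - \<pi>\<^sub>x)\<^sup>n - (1 - \<pi>\<^sub>y)\<^sup>n\<close> since \<open>\<pi>\<^sub>x + \<pi>\<^sub>y \<le> 1\<close>,
  so each summand is at most \<open>(1 - \<pi>\<^sub>x)\<^sup>n + (1 - \<pi>\<^sub>y)\<^sup>n \<le> exp (-n\<pi>\<^sub>x) + exp (-n\<pi>\<^sub>y)\<close>.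
  As \<open>\<pi>\<^sub>x \<ge> 1 / (ln 2 (x+1)\<^sup>2)\<close> and \<open>(x\<^sup>*\<^sub>n + 1)\<^sup>2 \<le> (5 / ln 2) n / ln n\<close> eventually
  (because \<open>C < 5 / ln 2\<close>), every summand is at most \<open>2 n\<^sup>-\<^sup>0\<^sup>.\<^sup>2\<close>, while there are
  at most \<open>(x\<^sup>*\<^sub>n)\<^sup>2 \<le> C n\<close> summands.
\<close>

lemma emeasure_gauss_measure_space: "emeasure gauss_measure (space gauss_measure) = 1"
proof -
  define f where "f w = 1 / (ln 2 * (1 + w))" for w :: real
  have "AE w in lborel. w \<noteq> 0" "AE w in lborel. w \<noteq> 1"
    by (rule AE_lborel_singleton)+
  then have "AE w in lborel. ennreal (indicator {0<..<1} w / (ln 2 * (1 + w)))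
      = ennreal (f w) * indicator {0..1} w"
    by eventually_elim (auto simp: f_def indicator_def)
  then have "emeasure gauss_measure (space gauss_measure)
      = (\<integral>\<^sup>+ w. ennreal (f w) * indicator {0..1} w \<partial>lborel)"
    unfolding gauss_measure_def by (simp add: emeasure_density nn_integral_cong_AE)
  also have "\<dots> = ennreal (ln (1 + 1) / ln 2 - ln (1 + 0) / ln 2)"
  proof (rule nn_integral_FTC_Icc)
    fix w :: real
    assume "w \<in> {0..1}"
    then show "((\<lambda>w. ln (1 + w) / ln 2) has_real_derivative f w) (at w)" and "0 \<le> f w"
      by (auto intro!: derivative_eq_intros simp: f_def)
  qed (auto simp: f_def)
  finally show ?thesis by simp
qed

lemma prob_space_gauss_measure: "prob_space gauss_measure"
  by (rule prob_spaceI) (rule emeasure_gauss_measure_space)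

lemma gauss_pi_eq: "gauss_pi x = - ln (1 - 1 / (real x + 1)^2) / ln 2"
  by (simp add: gauss_pi_def log_def)

lemma gauss_pi_ge:
  assumes "1 \<le> x"
  shows "1 / (ln 2 * (real x + 1)^2) \<le> gauss_pi x"
proof -
  define u where "u = 1 / (real x + 1)^2"
  have "u < 1"
    using assms by (simp add: u_def)
  then have "u \<le> - ln (1 - u)"
    using ln_le_minus_one[of "1 - u"] by simp
  then have "u / ln 2 \<le> - ln (1 - u) / ln 2"
    by (rule divide_right_mono) simp
  then show ?thesis
    by (simp add: gauss_pi_eq u_def mult.commute)
qed

lemma gauss_pi_le_half:
  assumes "1 \<le> x"
  shows "gauss_pi x \<le> 1 / 2"
proof -
  define u where "u = 1 / (real x + 1)^2"
  have "(real x + 1)^2 \<ge> 2^2"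
    using assms by (intro power_mono) auto
  then have u: "0 < u" "u \<le> 1 / 4"
    by (auto simp: u_def divide_simps)
  have "- ln (1 - u) = ln (1 / (1 - u))"
    using u by (simp add: ln_div)
  also have "\<dots> \<le> ln (4 / 3)"
    using u by (subst ln_le_cancel_iff) (auto simp: divide_simps)
  also have "\<dots> = ln ((4 / 3)^2) / 2"
    by (subst ln_realpow) auto
  also have "\<dots> \<le> ln 2 / 2"
    by (intro divide_right_mono) (auto simp: power2_eq_square)
  finally show ?thesis
    by (simp add: gauss_pi_eq u_def[symmetric] divide_simps)
qed

lemma one_minus_gauss_pi_power_le:
  assumes "1 \<le> x" "0 < n" and size: "a * ln 2 * ln (real n) * (real x + 1)^2 \<le> real n"
  shows "(1 - gauss_pi x)^n \<le> real n powr (- a)"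
proof -
  have "a * ln (real n) \<le> real n / (ln 2 * (real x + 1)^2)"
    using size by (simp add: pos_le_divide_eq algebra_simps)
  also have "\<dots> \<le> real n * gauss_pi x"
    using gauss_pi_ge[OF assms(1)] mult_left_mono[of _ _ "real n"] by fastforce
  finally have exponent: "a * ln (real n) \<le> real n * gauss_pi x" .
  have "(1 - gauss_pi x)^n = (1 - real n * gauss_pi x / real n)^n"
    using assms(2) by simp
  also have "\<dots> \<le> exp (- (real n * gauss_pi x))"
    using assms gauss_pi_le_half[OF assms(1)]
    by (intro exp_ge_one_minus_x_over_n_power_n) auto
  also have "\<dots> \<le> exp (- a * ln (real n))"
    using exponent by simp
  also have "\<dots> = real n powr (- a)"
    using assms(2) by (simp add: powr_def)
  finally show ?thesis .
qed

lemma measure_minus_P_tilde_le: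
  assumes "1 \<le> x" "1 \<le> y"
  shows "measure gauss_measure A - P_tilde n x y \<le> (1 - gauss_pi x)^n + (1 - gauss_pi y)^n"
proof -
  have "0 \<le> (1 - gauss_pi x - gauss_pi y)^n"
    using gauss_pi_le_half[OF assms(1)] gauss_pi_le_half[OF assms(2)] by simp
  then show ?thesis
    using prob_space.prob_le_1[OF prob_space_gauss_measure, of A] by (simp add: P_tilde_def)
qed

lemma card_ordered_pairs_le:
  "card {(x, y). 1 \<le> x \<and> x < y \<and> y \<le> m} \<le> m^2"
proof -
  have "card {(x, y). 1 \<le> x \<and> x < y \<and> y \<le> m} \<le> card ({1..m} \<times> {1..m})"
    by (rule card_mono) auto
  then show ?thesis
    by (simp add: power2_eq_square)
qed

lemma x_star_le: "real (x_star n) \<le> sqrt (C_const * real n / ln (real n))"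
proof -
  have "0 \<le> C_const * real n / ln (real n)"
    by (cases "n = 0") (auto simp: C_const_def)
  then show ?thesis
    unfolding x_star_def by (simp add: of_nat_nat floor_le_iff)
qed

lemma C_const_pos: "0 < C_const"
  unfolding C_const_def by (intro add_pos_pos) auto

lemma C_const_less: "C_const < 5 / ln 2"
  using ln2_le_25_over_36 by (simp add: C_const_def field_simps)

lemma eventually_sqrt_plus_one_sq_le:
  fixes c d :: real
  assumes "0 < c" "c < d"
  shows "\<forall>\<^sub>F t in at_top. (sqrt (c * t) + 1)^2 \<le> d * t"
proof -
  have "\<forall>\<^sub>F t in at_top. 2 * sqrt (c * t) + 1 \<le> e * t" if "0 < e" for e
    using that assms(1) by real_asymp
  with assms have "\<forall>\<^sub>F t in at_top. 2 * sqrt (c * t) + 1 \<le> (d - c) * t"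
    by simp
  with eventually_ge_at_top[of 0] show ?thesis
  proof eventually_elim
    case (elim t)
    with assms show ?case
      by (simp add: power2_sum algebra_simps)
  qed
qed

lemma eventually_x_star_size:
  "\<forall>\<^sub>F n in sequentially. 0.2 * ln 2 * ln (real n) * (real (x_star n) + 1)^2 \<le> real n"
proof -
  have "filterlim (\<lambda>n. real n / ln (real n)) at_top sequentially"
    by real_asymp
  moreover have "\<forall>\<^sub>F t in at_top. (sqrt (C_const * t) + 1)^2 \<le> 5 / ln 2 * t"
    using C_const_less by (intro eventually_sqrt_plus_one_sq_le) (auto simp: C_const_def)
  ultimately have "\<forall>\<^sub>F n in sequentially.
      (sqrt (C_const * (real n / ln (real n))) + 1)^2 \<le> 5 / ln 2 * (real n / ln (real n))"
    by (rule eventually_compose_filterlim[rotated])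
  with eventually_ge_at_top[of 2] show ?thesis
  proof eventually_elim
    case (elim n)
    have "real (x_star n) + 1 \<le> sqrt (C_const * (real n / ln (real n))) + 1"
      using x_star_le[of n] by simp
    then have "(real (x_star n) + 1)^2 \<le> (sqrt (C_const * (real n / ln (real n))) + 1)^2"
      by (rule power_mono) simp
    then have "(real (x_star n) + 1)^2 \<le> 5 / ln 2 * (real n / ln (real n))"
      using elim(2) by (rule order_trans)
    moreover have "0 < ln (real n)"
      using elim by simp
    ultimately show ?case
      by (simp add: field_simps)
  qed
qed

lemma x_star_sq_le:
  assumes "3 \<le> n"
  shows "real (x_star n)^2 \<le> C_const * real n"
proof -
  have "exp 1 \<le> real n"
    using exp_le assms by linarith
  then have "1 \<le> ln (real n)"
    using ln_mono[of "exp 1" "real n"] by simp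
  then have "C_const * real n / ln (real n) \<le> C_const * real n / 1"
    using C_const_pos by (intro divide_left_mono) auto
  moreover have "real (x_star n)^2 \<le> C_const * real n / ln (real n)"
    using power_mono[OF x_star_le[of n], of 2] C_const_pos \<open>1 \<le> ln (real n)\<close> by simp
  ultimately show ?thesis by simp
qed

lemma measure_minus_P_tilde_le_powr:
  assumes "1 \<le> x" "1 \<le> y" "x \<le> m" "y \<le> m" "2 \<le> n"
    and size: "0.2 * ln 2 * ln (real n) * (real m + 1)^2 \<le> real n"
  shows "measure gauss_measure A - P_tilde n x y \<le> 2 * real n powr (- 0.2)"
proof -
  have "(1 - gauss_pi z)^n \<le> real n powr (- 0.2)" if "1 \<le> z" "z \<le> m" for z
  proof (rule one_minus_gauss_pi_power_le)
    have "(real z + 1)^2 \<le> (real m + 1)^2"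
      using that by (intro power_mono) auto
    moreover have "0 \<le> 0.2 * ln 2 * ln (real n)"
      using assms(5) by simp
    ultimately show "0.2 * ln 2 * ln (real n) * (real z + 1)^2 \<le> real n"
      using mult_left_mono size order_trans by blast
  qed (use that assms(5) in auto)
  then have "(1 - gauss_pi x)^n + (1 - gauss_pi y)^n \<le> real n powr (- 0.2) + real n powr (- 0.2)"
    using assms(1-4) by (intro add_mono) auto
  with measure_minus_P_tilde_le[OF assms(1,2), of A n] show ?thesis
    unfolding mult_2 by (rule order_trans)
qed

lemma card_pairs_below_x_star_le:
  assumes "3 \<le> n"
  shows "real (card {(x, y). 1 \<le> x \<and> x < y \<and> y \<le> x_star n}) \<le> C_const * real n"
proof -
  have "real (card {(x, y). 1 \<le> x \<and> x < y \<and> y \<le> x_star n}) \<le> real (x_star n)^2"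
    using card_ordered_pairs_le unfolding of_nat_power[symmetric] of_nat_le_iff .
  with x_star_sq_le[OF assms] show ?thesis
    by linarith
qed

lemma sum_measure_minus_P_tilde_le:
  assumes "3 \<le> n" and size: "0.2 * ln 2 * ln (real n) * (real (x_star n) + 1)^2 \<le> real n"
  shows "(\<Sum>(x, y) \<in> {(x, y). 1 \<le> x \<and> x < y \<and> y \<le> x_star n}.
      measure gauss_measure (A x y) - P_tilde n x y) \<le> 2 * C_const * real n powr 0.8"
proof -
  define S where "S = {(x, y). 1 \<le> x \<and> x < y \<and> y \<le> x_star n}"
  have "measure gauss_measure (A x y) - P_tilde n x y \<le> 2 * real n powr (- 0.2)"
    if "(x, y) \<in> S" for x y
    using that assms(1) unfolding S_def
    by (intro measure_minus_P_tilde_le_powr[OF _ _ _ _ _ size]) auto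
  then have "(\<Sum>(x, y) \<in> S. measure gauss_measure (A x y) - P_tilde n x y)
      \<le> real (card S) * (2 * real n powr (- 0.2))"
    by (intro sum_bounded_above) auto
  also have "\<dots> \<le> C_const * real n * (2 * real n powr (- 0.2))"
    using card_pairs_below_x_star_le[OF assms(1)] unfolding S_def by (intro mult_right_mono) auto
  also have "\<dots> = 2 * C_const * (real n * real n powr (- 0.2))"
    by simp
  also have "real n * real n powr (- 0.2) = real n powr 0.8"
    using assms(1) by (simp add: powr_mult_base)
  finally show ?thesis
    unfolding S_def .
qed

theorem lemma12:
  shows "\<exists>C'>0. \<forall>\<^sub>F n in sequentially.
    (\<Sum>(x, y) \<in> {(x, y). 1 \<le> x \<and> x < y \<and> y \<le> x_star n}.
       measure gauss_measure {w \<in> {0<..<1}. cf_count n x w \<ge> 1 \<and> cf_count n y w \<ge> 1}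
       - P_tilde n x y)
    \<le> C' * real n powr 0.8"
proof (intro exI conjI)
  show "0 < 2 * C_const"
    using C_const_pos by simp
  from eventually_ge_at_top[of 3] eventually_x_star_size
  show "\<forall>\<^sub>F n in sequentially.
    (\<Sum>(x, y) \<in> {(x, y). 1 \<le> x \<and> x < y \<and> y \<le> x_star n}.
       measure gauss_measure {w \<in> {0<..<1}. cf_count n x w \<ge> 1 \<and> cf_count n y w \<ge> 1}
       - P_tilde n x y)
    \<le> 2 * C_const * real n powr 0.8"
    by eventually_elim (rule sum_measure_minus_P_tilde_le)
qed

end
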